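(* Let $X$ be a set and $z$ an element not contained in $X$. Every rack (resp. quandle) on $X$ embeds into a rack (resp. quandle) on $X\cup\{z\}$, i.e., is a subrack (resp. subquandle) of some rack (resp. quandle) defined on $X\cup\{z\}$.
   Context: A rack is a groupoid $(X,* )$ whose left translations $y\mapsto x*y$ are bijections and which satisfies $x*(y*z)=(x*y)*(x*z)$; a quandle is a rack satisfying $x*x=x$. *)

theory Defs
  imports Main
begin

definition rack :: "('a \<Rightarrow> 'a \<Rightarrow> 'a) \<Rightarrow> 'a set \<Rightarrow> bool" where
  "rack op X \<longleftrightarrow>
     (\<forall>x\<in>X. \<forall>y\<in>X. op x y \<in> X) \<and>
     (\<forall>x\<in>X. bij_betw (\<lambda>y. op x y) X X) \<and>
     (\<forall>x\<in>X. \<forall>y\<in>X. \<forall>z\<in>X. op x (op y z) = op (op x y) (op x z))"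

definition quandle :: "('a \<Rightarrow> 'a \<Rightarrow> 'a) \<Rightarrow> 'a set \<Rightarrow> bool" where
  "quandle op X \<longleftrightarrow> rack op X \<and> (\<forall>x\<in>X. op x x = x)"

definition subrack :: "('a \<Rightarrow> 'a \<Rightarrow> 'a) \<Rightarrow> 'a set \<Rightarrow> ('a \<Rightarrow> 'a \<Rightarrow> 'a) \<Rightarrow> 'a set \<Rightarrow> bool" where
  "subrack op X op' Y \<longleftrightarrow> X \<subseteq> Y \<and> (\<forall>x\<in>X. \<forall>y\<in>X. op' x y = op x y)"

end

theory Submission
  imports Defs
begin

text \<open>Let the new elements act trivially and be acted on trivially. Each left translation
  by an old element is then its old translation on X glued with the identity on the new
  elements, and every instance of self-distributivity either lies inside X or degenerates
  to an identity. This works for any superset of X.\<close>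

lemma rack_closed: "rack op X \<Longrightarrow> x \<in> X \<Longrightarrow> y \<in> X \<Longrightarrow> op x y \<in> X"
  unfolding rack_def by blast

lemma rack_bij_betw: "rack op X \<Longrightarrow> x \<in> X \<Longrightarrow> bij_betw (op x) X X"
  unfolding rack_def by blast

lemma rack_self_distrib:
  "rack op X \<Longrightarrow> x \<in> X \<Longrightarrow> y \<in> X \<Longrightarrow> w \<in> X \<Longrightarrow> op x (op y w) = op (op x y) (op x w)"
  unfolding rack_def by blast

definition trivial_extension :: "('a \<Rightarrow> 'a \<Rightarrow> 'a) \<Rightarrow> 'a set \<Rightarrow> 'a \<Rightarrow> 'a \<Rightarrow> 'a" where
  "trivial_extension op X a b = (if a \<in> X \<and> b \<in> X then op a b else b)"

lemma subrack_trivial_extension: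
  assumes "X \<subseteq> Y"
  shows "subrack op X (trivial_extension op X) Y"
  using assms by (simp add: subrack_def trivial_extension_def)

lemma trivial_extension_closed:
  assumes "rack op X" and "x \<in> Y" and "y \<in> Y" and "X \<subseteq> Y"
  shows "trivial_extension op X x y \<in> Y"
  using assms rack_closed[OF assms(1)] by (auto simp: trivial_extension_def)

lemma bij_betw_trivial_extension:
  assumes "rack op X" and "X \<subseteq> Y" and "x \<in> Y"
  shows "bij_betw (trivial_extension op X x) Y Y"
proof (cases "x \<in> X")
  case True
  have "bij_betw (op x) X X"
    using assms(1) True by (rule rack_bij_betw)
  then have "bij_betw (\<lambda>y. if y \<in> X then op x y else id y) (X \<union> (Y - X)) (X \<union> (Y - X))"
    by (intro bij_betw_disjoint_Un bij_betw_id) auto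
  moreover have "X \<union> (Y - X) = Y"
    using assms(2) by blast
  moreover have "trivial_extension op X x = (\<lambda>y. if y \<in> X then op x y else id y)"
    using True by (simp add: trivial_extension_def fun_eq_iff)
  ultimately show ?thesis
    by simp
next
  case False
  then have "trivial_extension op X x = id"
    by (simp add: trivial_extension_def fun_eq_iff)
  then show ?thesis
    by simp
qed

lemma trivial_extension_self_distrib:
  assumes "rack op X"
  shows "trivial_extension op X x (trivial_extension op X y w)
       = trivial_extension op X (trivial_extension op X x y) (trivial_extension op X x w)"
proof (cases "x \<in> X \<and> y \<in> X \<and> w \<in> X")
  case True
  then have "op x (op y w) = op (op x y) (op x w)"
    using assms by (intro rack_self_distrib) auto
  then show ?thesis
    using True rack_closed[OF assms] by (simp add: trivial_extension_def)
next
  case False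
  then show ?thesis
    using rack_closed[OF assms]
    by (cases "x \<in> X"; cases "y \<in> X") (auto simp: trivial_extension_def)
qed

lemma rack_trivial_extension:
  assumes "rack op X" and "X \<subseteq> Y"
  shows "rack (trivial_extension op X) Y"
  unfolding rack_def
  by (intro conjI ballI trivial_extension_closed[OF assms(1) _ _ assms(2)]
      bij_betw_trivial_extension[OF assms] trivial_extension_self_distrib[OF assms(1)])

lemma quandle_trivial_extension:
  assumes "quandle op X" and "X \<subseteq> Y"
  shows "quandle (trivial_extension op X) Y"
  using assms rack_trivial_extension[OF _ assms(2)]
  by (simp add: quandle_def trivial_extension_def)

theorem proposition3p9:
  fixes X :: "'a set" and z :: 'a
  assumes "z \<notin> X"
  shows "(\<forall>op. rack op X \<longrightarrow>
            (\<exists>op'. rack op' (insert z X) \<and> subrack op X op' (insert z X)))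
       \<and> (\<forall>op. quandle op X \<longrightarrow>
            (\<exists>op'. quandle op' (insert z X) \<and> subrack op X op' (insert z X)))"
proof -
  have "X \<subseteq> insert z X"
    by blast
  then show ?thesis
    using rack_trivial_extension quandle_trivial_extension subrack_trivial_extension
    by (intro conjI allI impI exI[of _ "trivial_extension _ X"] conjI) auto
qed

end
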